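(* Let $\mathbb{S}=[S_m,S_M]$ with $S_m<S_M$, and let $h$ be a continuously differentiable, monotonically non-decreasing link function (defined on an open interval containing all points at which it is evaluated below) whose range over $\mathbb{S}$ is the compact interval $[h(S_m),h(S_M)]$, with $h(S_M)>h(S_m)$. Fix $w_u$ in the interior of $\mathbb{S}$, a bias $d\in\mathbb{R}$ and a width $\tau>0$, let $\mathbb{S}_u=[w_u-\tau/2,\,w_u+\tau/2]\subset\mathbb{S}$, and let the observed score be $z(w)=w+I_u(w)\,d$, where $I_u(w)=1$ if $w\in\mathbb{S}_u$ and $I_u(w)=0$ otherwise, with $w$ uniformly distributed on $\mathbb{S}$. Suppose the model predicts $\hat z=w+\hat\delta$, where the constant offset $\hat\delta=\hat\delta(\tau,d)$ is optimal for the expected matching loss, i.e. it satisfies $$\int_{S_m}^{S_M}\big[h(w+\hat\delta)-h(z(w))\big]\,dw=0 .$$ Define $\Delta_{\mathrm{BUST}}(w_u)=\lim_{\tau\to0}\frac{1}{\tau}(\hat z-w)=\lim_{\tau\to 0}\hat\delta/\tau$ and $\Delta_{\mathrm{BLUST}}(w_u)=\lim_{\tau\to0,\,d\to0}\frac{1}{d\tau}(\hat z-w)$. Then $$\Delta_{\mathrm{BUST}}(w_u)=\frac{h(w_u+d)-h(w_u)}{h(S_M)-h(S_m)},\qquad \Delta_{\mathrm{BLUST}}(w_u)=\frac{h'(w_u)}{h(S_M)-h(S_m)}.$$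
   Context: A link function $h$ with primitive $H$ (so $H'=h$) defines the scalar matching loss $\mathcal{L}_m(\hat s,s)=H(\hat s)-H(s)-(\hat s-s)h(s)=\int_s^{\hat s}[h(z)-h(s)]\,dz$, whose gradient in $\hat s$ is $h(\hat s)-h(s)$. Links are taken monotonically non-decreasing, so the loss is convex in $\hat s$. In the bias-underspecification model, the model has no feature distinguishing $\mathbb{S}_u$ from the rest of $\mathbb{S}$, so it can only predict the collective score shifted by a single constant offset $\hat\delta$, chosen so that the expected gradient of the matching loss (over $w\sim U(\mathbb{S})$) vanishes. *)

theory Defs
  imports "HOL-Analysis.Analysis"
begin

definition I_u :: "real \<Rightarrow> real \<Rightarrow> real \<Rightarrow> real" where
  "I_u wu \<tau> w = (if w \<in> {wu - \<tau>/2 .. wu + \<tau>/2} then 1 else 0)"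

definition obs_score :: "real \<Rightarrow> real \<Rightarrow> real \<Rightarrow> real \<Rightarrow> real" where
  "obs_score wu \<tau> d w = w + I_u wu \<tau> w * d"

text \<open>Optimality (vanishing expected gradient of the matching loss) of the offset \<delta>,
  with all evaluation points of h inside the domain I.\<close>
definition optimal_offset ::
  "real set \<Rightarrow> (real \<Rightarrow> real) \<Rightarrow> real \<Rightarrow> real \<Rightarrow> real \<Rightarrow> real \<Rightarrow> real \<Rightarrow> real \<Rightarrow> bool" where
  "optimal_offset I h Sm SM wu \<tau> d \<delta> \<longleftrightarrow>
     {Sm + \<delta> .. SM + \<delta>} \<subseteq> I \<and>
     integral {Sm..SM} (\<lambda>w. h (w + \<delta>) - h (obs_score wu \<tau> d w)) = 0"

end

theory Submission
  imports Defs
begin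

(*
  Put F e = integral of h (w + e) over [Sm, SM], and R tau d = integral of h (w + d) - h w over S_u.
  Since h (z w) = h w + I_u w * (h (w + d) - h w), the optimality condition for delta says exactly
  F delta - F 0 = R tau d.  F is monotone with F' 0 = h SM - h Sm > 0, so near 0 it has an inverse
  with Lipschitz constant 2 / (h SM - h Sm), and monotonicity excludes optimal offsets far from 0.
  Hence delta tends to 0 with R, and delta / s has the same limit as (R / s) / (h SM - h Sm) for
  every scale s tending to 0.  It remains to find the limits of R: R / tau is the mean of the
  continuous function h (w + d) - h w over the shrinking window S_u, and R / (d tau) is a mean of
  difference quotients of h, which tend uniformly to h' wu by the mean value inequality.
*)

lemma continuous_on_increment:
  fixes h :: "real \<Rightarrow> real"
  assumes "continuous_on A h" and "{a..b} \<subseteq> A" and "{a + d..b + d} \<subseteq> A"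
  shows "continuous_on {a..b} (\<lambda>w. h (w + d) - h w)"
proof (rule continuous_on_diff)
  show "continuous_on {a..b} (\<lambda>w. h (w + d))"
  proof (rule continuous_on_compose2[OF assms(1)])
    show "(\<lambda>w. w + d) ` {a..b} \<subseteq> A"
      using assms(3) by auto
  qed (intro continuous_intros)
  show "continuous_on {a..b} h"
    using assms(1,2) by (rule continuous_on_subset)
qed

lemma centered_integral_average_bound:
  fixes g :: "real \<Rightarrow> real"
  assumes "\<tau> > 0" and cont: "continuous_on {x - \<tau>/2..x + \<tau>/2} g"
    and "\<And>w. w \<in> {x - \<tau>/2..x + \<tau>/2} \<Longrightarrow> \<bar>g w - K\<bar> \<le> B"
  shows "\<bar>integral {x - \<tau>/2..x + \<tau>/2} g / \<tau> - K\<bar> \<le> B"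
proof -
  have "norm (integral {x - \<tau>/2..x + \<tau>/2} (\<lambda>w. g w - K)) \<le> B * (x + \<tau>/2 - (x - \<tau>/2))"
    using assms by (intro integral_bound continuous_on_diff continuous_on_const cont) auto
  moreover have "integral {x - \<tau>/2..x + \<tau>/2} (\<lambda>w. g w - K) = integral {x - \<tau>/2..x + \<tau>/2} g - \<tau> * K"
    using \<open>\<tau> > 0\<close> integral_diff[OF integrable_continuous_interval[OF cont] integrable_const_ivl[of K]]
    by simp
  ultimately have "\<bar>integral {x - \<tau>/2..x + \<tau>/2} g - \<tau> * K\<bar> \<le> B * \<tau>"
    by simp
  also have "integral {x - \<tau>/2..x + \<tau>/2} g - \<tau> * K = \<tau> * (integral {x - \<tau>/2..x + \<tau>/2} g / \<tau> - K)"
    using \<open>\<tau> > 0\<close> by (simp add: field_simps)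
  finally show ?thesis
    using \<open>\<tau> > 0\<close> by (simp add: abs_mult)
qed

lemma tendsto_centered_integral_average:
  fixes g :: "real \<Rightarrow> real"
  assumes "\<rho> > 0" and "continuous_on {x - \<rho>..x + \<rho>} g"
  shows "((\<lambda>\<tau>. integral {x - \<tau>/2..x + \<tau>/2} g / \<tau>) \<longlongrightarrow> g x) (at_right 0)"
proof (rule tendstoI)
  fix \<epsilon> :: real
  assume "\<epsilon> > 0"
  then obtain \<rho>' where "\<rho>' > 0"
    and near: "\<And>w. w \<in> {x - \<rho>..x + \<rho>} \<Longrightarrow> dist w x < \<rho>' \<Longrightarrow> dist (g w) (g x) < \<epsilon>/2"
    using assms continuous_on_iff[THEN iffD1, rule_format, of _ g x "\<epsilon>/2"] by force
  have "eventually (\<lambda>\<tau>. \<tau> \<in> {0<..<min \<rho> \<rho>'}) (at_right 0)"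
    using \<open>\<rho> > 0\<close> \<open>\<rho>' > 0\<close> by (intro eventually_at_right_real) simp
  then show "eventually (\<lambda>\<tau>. dist (integral {x - \<tau>/2..x + \<tau>/2} g / \<tau>) (g x) < \<epsilon>) (at_right 0)"
  proof eventually_elim
    case (elim \<tau>)
    have "\<bar>integral {x - \<tau>/2..x + \<tau>/2} g / \<tau> - g x\<bar> \<le> \<epsilon>/2"
    proof (rule centered_integral_average_bound)
      show "continuous_on {x - \<tau>/2..x + \<tau>/2} g"
        using elim by (intro continuous_on_subset[OF assms(2)]) auto
      show "\<bar>g w - g x\<bar> \<le> \<epsilon>/2" if w: "w \<in> {x - \<tau>/2..x + \<tau>/2}" for w
      proof -
        have "dist w x < \<rho>'"
          using w elim by (auto simp: dist_real_def abs_le_iff)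
        then show ?thesis
          using near[of w] w elim by (auto simp: dist_real_def)
      qed
    qed (use elim in auto)
    then show ?case
      using \<open>\<epsilon> > 0\<close> by (simp add: dist_real_def)
  qed
qed

lemma increment_linearization_bound:
  fixes h h' :: "real \<Rightarrow> real"
  assumes deriv: "\<And>y. y \<in> {a..b} \<Longrightarrow> (h has_real_derivative h' y) (at y)"
    and near: "\<And>y. y \<in> {a..b} \<Longrightarrow> \<bar>h' y - h' x\<bar> \<le> B"
    and "w \<in> {a..b}" and "w + d \<in> {a..b}"
  shows "\<bar>h (w + d) - h w - d * h' x\<bar> \<le> B * \<bar>d\<bar>"
proof -
  define g where "g y = h y - h' x * y" for y
  have "(g has_real_derivative h' y - h' x) (at y within {a..b})" if "y \<in> {a..b}" for y
    unfolding g_def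
    by (intro DERIV_diff has_field_derivative_at_within[OF deriv[OF that]] DERIV_cmult_Id)
  then have "norm (g (w + d) - g w) \<le> B * norm (w + d - w)"
    using near assms(3,4) by (intro field_differentiable_bound[of "{a..b}"]) auto
  then show ?thesis
    by (simp add: g_def algebra_simps)
qed

lemma centered_increment_average_bound:
  fixes h h' :: "real \<Rightarrow> real"
  assumes "\<tau> > 0" and "d \<noteq> 0"
    and deriv: "\<And>y. y \<in> {a..b} \<Longrightarrow> (h has_real_derivative h' y) (at y)"
    and near: "\<And>y. y \<in> {a..b} \<Longrightarrow> \<bar>h' y - h' x\<bar> \<le> B"
    and window: "{x - \<tau>/2..x + \<tau>/2} \<subseteq> {a..b}" and shifted_window: "{x - \<tau>/2 + d..x + \<tau>/2 + d} \<subseteq> {a..b}"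
  shows "\<bar>integral {x - \<tau>/2..x + \<tau>/2} (\<lambda>w. h (w + d) - h w) / (d * \<tau>) - h' x\<bar> \<le> B"
proof -
  have "continuous_on {a..b} h"
    using deriv by (meson DERIV_isCont continuous_at_imp_continuous_on)
  then have "continuous_on {x - \<tau>/2..x + \<tau>/2} (\<lambda>w. h (w + d) - h w)"
    using window shifted_window by (intro continuous_on_increment) auto
  moreover have "\<bar>h (w + d) - h w - d * h' x\<bar> \<le> B * \<bar>d\<bar>" if "w \<in> {x - \<tau>/2..x + \<tau>/2}" for w
  proof (rule increment_linearization_bound[OF deriv near])
    show "w \<in> {a..b}" "w + d \<in> {a..b}"
      using that subsetD[OF window, of w] subsetD[OF shifted_window, of "w + d"] by auto
  qed
  ultimately have "\<bar>integral {x - \<tau>/2..x + \<tau>/2} (\<lambda>w. h (w + d) - h w) / \<tau> - d * h' x\<bar> \<le> B * \<bar>d\<bar>"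
    using \<open>\<tau> > 0\<close> by (intro centered_integral_average_bound) auto
  also have "integral {x - \<tau>/2..x + \<tau>/2} (\<lambda>w. h (w + d) - h w) / \<tau> - d * h' x
      = d * (integral {x - \<tau>/2..x + \<tau>/2} (\<lambda>w. h (w + d) - h w) / (d * \<tau>) - h' x)"
    using \<open>d \<noteq> 0\<close> by (simp add: field_simps)
  finally show ?thesis
    using \<open>d \<noteq> 0\<close> by (simp add: abs_mult mult.commute)
qed

lemma tendsto_centered_increment_average:
  fixes h h' :: "real \<Rightarrow> real"
  assumes "\<rho> > 0" and deriv: "\<And>y. y \<in> {x - \<rho>..x + \<rho>} \<Longrightarrow> (h has_real_derivative h' y) (at y)"
    and "isCont h' x"
  shows "((\<lambda>p. integral {x - fst p/2..x + fst p/2} (\<lambda>w. h (w + snd p) - h w) / (snd p * fst p))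
           \<longlongrightarrow> h' x) (at (0, 0) within {p. fst p > 0 \<and> snd p \<noteq> 0})"
proof (rule tendstoI)
  fix \<epsilon> :: real
  assume "\<epsilon> > 0"
  then obtain \<rho>' where "\<rho>' > 0" and near: "\<And>y. dist y x < \<rho>' \<Longrightarrow> dist (h' y) (h' x) < \<epsilon>/2"
    using assms(3)[unfolded continuous_at_eps_delta, rule_format, of "\<epsilon>/2"] by auto
  define r where "r = min \<rho> \<rho>' / 2"
  have "r > 0" "r \<le> \<rho>" "r < \<rho>'"
    using \<open>\<rho> > 0\<close> \<open>\<rho>' > 0\<close> by (simp_all add: r_def)
  have "eventually (\<lambda>p. fst p > 0 \<and> snd p \<noteq> 0 \<and> dist p (0, 0) < r/2)
          (at (0, 0) within {p. fst p > 0 \<and> snd p \<noteq> 0})"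
    using \<open>r > 0\<close> unfolding eventually_at by (intro exI[of _ "r/2"]) auto
  then show "eventually (\<lambda>p. dist (integral {x - fst p/2..x + fst p/2} (\<lambda>w. h (w + snd p) - h w)
      / (snd p * fst p)) (h' x) < \<epsilon>) (at (0, 0) within {p. fst p > 0 \<and> snd p \<noteq> 0})"
  proof eventually_elim
    case (elim p)
    obtain \<tau> d where p: "p = (\<tau>, d)"
      by fastforce
    have small: "\<tau> > 0" "d \<noteq> 0" "\<tau> < r" "\<bar>d\<bar> < r/2"
      using elim dist_fst_le[of p "(0, 0)"] dist_snd_le[of p "(0, 0)"] by (auto simp: p dist_real_def)
    have "\<bar>integral {x - \<tau>/2..x + \<tau>/2} (\<lambda>w. h (w + d) - h w) / (d * \<tau>) - h' x\<bar> \<le> \<epsilon>/2"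
    proof (rule centered_increment_average_bound[where a = "x - r" and b = "x + r"])
      show "(h has_real_derivative h' y) (at y)" if "y \<in> {x - r..x + r}" for y
        using that \<open>r \<le> \<rho>\<close> by (intro deriv) auto
      show "\<bar>h' y - h' x\<bar> \<le> \<epsilon>/2" if "y \<in> {x - r..x + r}" for y
      proof -
        have "dist y x < \<rho>'"
          using that \<open>r < \<rho>'\<close> by (auto simp: dist_real_def abs_less_iff)
        then show ?thesis
          using near[of y] by (simp add: dist_real_def)
      qed
    qed (use small in \<open>auto simp: abs_less_iff\<close>)
    then show ?case
      using \<open>\<epsilon> > 0\<close> by (simp add: p dist_real_def)
  qed
qed

lemma tendsto_ratio_of_inverse:
  fixes \<Phi> :: "real \<Rightarrow> real" and R D s :: "'a \<Rightarrow> real"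
  assumes \<Phi>': "(\<Phi> has_real_derivative c) (at 0)" and "c \<noteq> 0" and "m > 0"
    and inverse: "eventually (\<lambda>x. \<bar>R x\<bar> < m \<longrightarrow> \<Phi> (D x) - \<Phi> 0 = R x \<and> \<bar>D x\<bar> \<le> K * \<bar>R x\<bar>) F"
    and ratio: "((\<lambda>x. R x / s x) \<longlongrightarrow> L) F" and "(s \<longlongrightarrow> 0) F"
    and s_nonzero: "eventually (\<lambda>x. s x \<noteq> 0) F"
  shows "((\<lambda>x. D x / s x) \<longlongrightarrow> L / c) F"
proof -
  \<comment> \<open>Eventually R = D * q D, and q D tends to c because D tends to 0 with R.\<close>
  define q where "q y = (if y = 0 then c else (\<Phi> y - \<Phi> 0) / y)" for y
  have "(q \<longlongrightarrow> c) (at 0)"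
  proof -
    have "((\<lambda>y. (\<Phi> y - \<Phi> 0) / (y - 0)) \<longlongrightarrow> c) (at 0)"
      using \<Phi>' has_field_derivative_iff by blast
    then show ?thesis
      by (rule tendsto_cong[THEN iffD1, rotated]) (auto simp: q_def eventually_at_filter)
  qed
  then have q_cont: "isCont q 0"
    by (simp add: isCont_def q_def)
  have "((\<lambda>x. R x / s x * s x) \<longlongrightarrow> L * 0) F"
    by (intro tendsto_mult ratio assms)
  moreover have "eventually (\<lambda>x. R x / s x * s x = R x) F"
    using s_nonzero by eventually_elim simp
  ultimately have R0: "(R \<longlongrightarrow> 0) F"
    by (simp add: Lim_transform_eventually)
  then have "eventually (\<lambda>x. \<bar>R x\<bar> < m) F"
    using order_tendstoD(2)[OF tendsto_rabs_zero \<open>m > 0\<close>] by blast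
  with inverse have solves: "eventually (\<lambda>x. \<Phi> (D x) - \<Phi> 0 = R x \<and> \<bar>D x\<bar> \<le> K * \<bar>R x\<bar>) F"
    by eventually_elim blast
  have "((\<lambda>x. K * \<bar>R x\<bar>) \<longlongrightarrow> 0) F"
    using tendsto_mult_right_zero[OF tendsto_rabs_zero[OF R0]] .
  then have "(D \<longlongrightarrow> 0) F"
    by (rule Lim_null_comparison[rotated]) (use solves in \<open>eventually_elim, auto\<close>)
  then have qD: "((\<lambda>x. q (D x)) \<longlongrightarrow> c) F"
    using isCont_tendsto_compose[OF q_cont] by (simp add: q_def)
  have "((\<lambda>x. (R x / s x) / q (D x)) \<longlongrightarrow> L / c) F"
    by (intro tendsto_divide ratio qD \<open>c \<noteq> 0\<close>)
  moreover have "eventually (\<lambda>x. (R x / s x) / q (D x) = D x / s x) F"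
    using solves by eventually_elim (auto simp: q_def)
  ultimately show ?thesis
    by (rule Lim_transform_eventually)
qed

lemma integrable_on_shift:
  fixes h :: "real \<Rightarrow> real"
  assumes "continuous_on I h" and "{a + s..b + s} \<subseteq> I"
  shows "(\<lambda>w. h (w + s)) integrable_on {a..b}"
  using integrable_shift_real_ivl_iff[of h s "a + s" "b + s"] assms
  by (simp add: continuous_on_subset integrable_continuous_interval)

lemma integral_shift_has_real_derivative:
  fixes h :: "real \<Rightarrow> real"
  assumes "a \<le> b" and cont: "continuous_on {a - r..b + r} h" and "\<bar>e\<bar> < r"
  shows "((\<lambda>t. integral {a..b} (\<lambda>w. h (w + t))) has_real_derivative h (b + e) - h (a + e)) (at e)"
proof -
  define G where "G = (\<lambda>x. integral {a - r..x} h)"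
  have G': "(G has_real_derivative h x) (at x)" if "a - r < x" "x < b + r" for x
    using integral_has_real_derivative[OF cont, of x] at_within_Icc_at[OF that] that
    by (simp add: G_def)
  have G_diff: "integral {a..b} (\<lambda>w. h (w + t)) = G (b + t) - G (a + t)" if "t \<in> {-r<..<r}" for t
  proof -
    have "integral {a..b} (\<lambda>w. h (w + t)) = integral {a + t..b + t} h"
      using integral_shift_Icc_real[of a b h t] by (simp add: o_def add.commute)
    also have "\<dots> = G (b + t) - G (a + t)"
    proof -
      have integrable: "h integrable_on {a - r..b + t}"
        using that by (intro integrable_continuous_interval continuous_on_subset[OF cont]) auto
      have "integral {a - r..a + t} h + integral {a + t..b + t} h = integral {a - r..b + t} h"
        using that \<open>a \<le> b\<close> by (intro Henstock_Kurzweil_Integration.integral_combine[OF _ _ integrable]) auto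
      then show ?thesis
        unfolding G_def by linarith
    qed
    finally show ?thesis .
  qed
  have shifted: "((\<lambda>t. G (c + t)) has_real_derivative h (c + e)) (at e)"
    if "a - r < c + e" "c + e < b + r" for c
    using G'[OF that] DERIV_shift[of G "h (c + e)" e c] by (simp add: add.commute)
  have "((\<lambda>t. G (b + t) - G (a + t)) has_real_derivative h (b + e) - h (a + e)) (at e)"
    using assms by (intro DERIV_diff shifted) auto
  then show ?thesis
    by (rule has_field_derivative_transform_within_open[where S = "{-r<..<r}"])
      (use assms G_diff in auto)
qed

lemma integral_shift_mono:
  fixes h :: "real \<Rightarrow> real"
  assumes "mono_on I h" and "continuous_on I h"
    and "{a + s..b + s} \<subseteq> I" and "{a + t..b + t} \<subseteq> I" and "s \<le> t"
  shows "integral {a..b} (\<lambda>w. h (w + s)) \<le> integral {a..b} (\<lambda>w. h (w + t))"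
  using assms by (intro integral_le integrable_on_shift mono_onD[OF assms(1)]) auto

lemma has_real_derivative_pos_local_growth:
  fixes \<Phi> :: "real \<Rightarrow> real"
  assumes "(\<Phi> has_real_derivative c) (at 0)" and "c > 0" and "\<rho> > 0"
  obtains \<eta> where "\<eta> > 0" and "\<eta> \<le> \<rho>"
    and "\<And>e. 0 \<le> e \<Longrightarrow> e \<le> \<eta> \<Longrightarrow> c/2 * e \<le> \<Phi> e - \<Phi> 0"
    and "\<And>e. -\<eta> \<le> e \<Longrightarrow> e \<le> 0 \<Longrightarrow> \<Phi> e - \<Phi> 0 \<le> c/2 * e"
proof -
  have "((\<lambda>e. (\<Phi> e - \<Phi> 0) / (e - 0)) \<longlongrightarrow> c) (at 0)"
    using assms(1) has_field_derivative_iff by blast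
  then have "eventually (\<lambda>e. (\<Phi> e - \<Phi> 0) / e > c/2) (at 0)"
    using \<open>c > 0\<close> by (auto dest: order_tendstoD(1)[of _ c _ "c/2"])
  then obtain \<eta>0 where "\<eta>0 > 0"
    and slope: "\<And>e. e \<noteq> 0 \<Longrightarrow> \<bar>e\<bar> < \<eta>0 \<Longrightarrow> (\<Phi> e - \<Phi> 0) / e > c/2"
    unfolding eventually_at by (auto simp: dist_real_def)
  define \<eta> where "\<eta> = min \<rho> (\<eta>0/2)"
  show ?thesis
  proof (rule that[of \<eta>])
    show "c/2 * e \<le> \<Phi> e - \<Phi> 0" if "0 \<le> e" "e \<le> \<eta>" for e
    proof (cases "e = 0")
      case False
      then have "(\<Phi> e - \<Phi> 0) / e > c/2"
        using slope that \<open>\<eta>0 > 0\<close> by (simp add: \<eta>_def)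
      then show ?thesis
        using that False by (simp add: field_simps)
    qed simp
    show "\<Phi> e - \<Phi> 0 \<le> c/2 * e" if "-\<eta> \<le> e" "e \<le> 0" for e
    proof (cases "e = 0")
      case False
      then have "(\<Phi> e - \<Phi> 0) / e > c/2"
        using slope that \<open>\<eta>0 > 0\<close> by (simp add: \<eta>_def)
      then show ?thesis
        using that False by (simp add: field_simps)
    qed simp
  qed (use \<open>\<rho> > 0\<close> \<open>\<eta>0 > 0\<close> in \<open>auto simp: \<eta>_def\<close>)
qed

lemma mono_on_local_inverse:
  fixes \<Phi> :: "real \<Rightarrow> real"
  assumes mono: "mono_on J \<Phi>" and "{-\<rho>..\<rho>} \<subseteq> J" and "\<rho> > 0"
    and cont: "continuous_on {-\<rho>..\<rho>} \<Phi>"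
    and \<Phi>': "(\<Phi> has_real_derivative c) (at 0)" and "c > 0"
  obtains m where "m > 0"
    and "\<And>y. \<bar>y\<bar> < m \<Longrightarrow> \<exists>e\<in>{-\<rho>..\<rho>}. \<Phi> e - \<Phi> 0 = y"
    and "\<And>y e. \<bar>y\<bar> < m \<Longrightarrow> e \<in> J \<Longrightarrow> \<Phi> e - \<Phi> 0 = y \<Longrightarrow> \<bar>e\<bar> \<le> 2/c * \<bar>y\<bar>"
proof -
  obtain \<eta> where "\<eta> > 0" "\<eta> \<le> \<rho>"
    and right: "\<And>e. 0 \<le> e \<Longrightarrow> e \<le> \<eta> \<Longrightarrow> c/2 * e \<le> \<Phi> e - \<Phi> 0"
    and left: "\<And>e. -\<eta> \<le> e \<Longrightarrow> e \<le> 0 \<Longrightarrow> \<Phi> e - \<Phi> 0 \<le> c/2 * e"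
    using has_real_derivative_pos_local_growth[OF \<Phi>' \<open>c > 0\<close> \<open>\<rho> > 0\<close>] by blast
  have up: "c/2 * \<eta> \<le> \<Phi> \<eta> - \<Phi> 0" and down: "\<Phi> (-\<eta>) - \<Phi> 0 \<le> -(c/2 * \<eta>)"
    using right[of \<eta>] left[of "-\<eta>"] \<open>\<eta> > 0\<close> by simp_all
  show ?thesis
  proof
    show "c/2 * \<eta> > 0"
      using \<open>c > 0\<close> \<open>\<eta> > 0\<close> by simp
    show "\<exists>e\<in>{-\<rho>..\<rho>}. \<Phi> e - \<Phi> 0 = y" if y: "\<bar>y\<bar> < c/2 * \<eta>" for y
    proof -
      have "continuous_on {-\<eta>..\<eta>} \<Phi>"
        using \<open>\<eta> \<le> \<rho>\<close> by (intro continuous_on_subset[OF cont]) auto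
      moreover have "\<Phi> (-\<eta>) \<le> \<Phi> 0 + y" "\<Phi> 0 + y \<le> \<Phi> \<eta>"
        using up down y abs_less_iff[of y] by linarith+
      ultimately obtain e where "-\<eta> \<le> e" "e \<le> \<eta>" "\<Phi> e = \<Phi> 0 + y"
        using IVT'[of \<Phi> "-\<eta>" "\<Phi> 0 + y" \<eta>] \<open>\<eta> > 0\<close> by auto
      then show ?thesis
        using \<open>\<eta> \<le> \<rho>\<close> by (intro bexI[of _ e]) auto
    qed
    show "\<bar>e\<bar> \<le> 2/c * \<bar>y\<bar>" if y: "\<bar>y\<bar> < c/2 * \<eta>" and "e \<in> J" and e: "\<Phi> e - \<Phi> 0 = y"
      for y e
    proof -
      have y_bounds: "-(c/2 * \<eta>) < y" "y < c/2 * \<eta>"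
        using y abs_less_iff[of y] by linarith+
      have "\<eta> \<in> J" "-\<eta> \<in> J"
        using assms(2) \<open>\<eta> > 0\<close> \<open>\<eta> \<le> \<rho>\<close> by auto
      \<comment> \<open>Monotonicity on all of J rules out solutions outside [-\<eta>, \<eta>].\<close>
      have "\<not> e > \<eta>"
        using mono_onD[OF mono \<open>\<eta> \<in> J\<close> \<open>e \<in> J\<close>] up e y_bounds by linarith
      moreover have "\<not> e < -\<eta>"
        using mono_onD[OF mono \<open>e \<in> J\<close> \<open>-\<eta> \<in> J\<close>] down e y_bounds by linarith
      ultimately have "c/2 * \<bar>e\<bar> \<le> \<bar>y\<bar>"
        using right[of e] left[of e] e by (cases "e \<ge> 0") auto
      then show ?thesis
        using \<open>c > 0\<close> by (simp add: field_simps)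
    qed
  qed
qed

lemma has_integral_obs_score:
  fixes h :: "real \<Rightarrow> real"
  assumes "Sm \<le> wu - \<tau>/2" and "wu + \<tau>/2 \<le> SM" and "h integrable_on {Sm..SM}"
    and "(\<lambda>w. h (w + d) - h w) integrable_on {wu - \<tau>/2..wu + \<tau>/2}"
  shows "((\<lambda>w. h (obs_score wu \<tau> d w)) has_integral
           integral {Sm..SM} h + integral {wu - \<tau>/2..wu + \<tau>/2} (\<lambda>w. h (w + d) - h w)) {Sm..SM}"
proof -
  let ?S\<^sub>u = "{wu - \<tau>/2..wu + \<tau>/2}"
  have "h (obs_score wu \<tau> d w) = h w + (if w \<in> ?S\<^sub>u then h (w + d) - h w else 0)" for w
    by (simp add: obs_score_def I_u_def)
  moreover have "((\<lambda>w. if w \<in> ?S\<^sub>u then h (w + d) - h w else 0) has_integral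
      integral ?S\<^sub>u (\<lambda>w. h (w + d) - h w)) {Sm..SM}"
  proof -
    have S\<^sub>u_inside: "?S\<^sub>u \<inter> {Sm..SM} = ?S\<^sub>u"
      using assms(1,2) by auto
    show ?thesis
      unfolding has_integral_restrict_Int S\<^sub>u_inside by (rule integrable_integral[OF assms(4)])
  qed
  ultimately show ?thesis
    using has_integral_add[OF integrable_integral[OF assms(3)]] by simp
qed

lemma open_interval_Icc_margin:
  fixes I :: "real set"
  assumes "open I" and "is_interval I" and "{a..b} \<subseteq> I" and "a \<le> b"
  obtains r where "r > 0" and "{a - r..b + r} \<subseteq> I"
proof -
  have "a \<in> I" "b \<in> I"
    using assms(3,4) by auto
  then obtain r\<^sub>a r\<^sub>b where "r\<^sub>a > 0" "{a - r\<^sub>a..a + r\<^sub>a} \<subseteq> I" "r\<^sub>b > 0" "{b - r\<^sub>b..b + r\<^sub>b} \<subseteq> I"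
    using \<open>open I\<close> unfolding open_contains_cball cball_eq_atLeastAtMost by blast
  then have "a - min r\<^sub>a r\<^sub>b \<in> I" "b + min r\<^sub>a r\<^sub>b \<in> I"
    by auto
  then have "{a - min r\<^sub>a r\<^sub>b..b + min r\<^sub>a r\<^sub>b} \<subseteq> I"
    using assms(2) unfolding is_interval_1 by (meson atLeastAtMost_iff subsetI)
  then show ?thesis
    using \<open>r\<^sub>a > 0\<close> \<open>r\<^sub>b > 0\<close> by (intro that[of "min r\<^sub>a r\<^sub>b"]) auto
qed

locale bias_underspecification =
  fixes h h' :: "real \<Rightarrow> real" and I :: "real set" and Sm SM wu :: real
    and \<delta> :: "real \<Rightarrow> real \<Rightarrow> real"
  assumes Sm_less_SM: "Sm < SM"
    and open_I: "open I" and interval_I: "is_interval I" and score_range_subset: "{Sm..SM} \<subseteq> I"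
    and h_deriv: "\<And>x. x \<in> I \<Longrightarrow> (h has_real_derivative h' x) (at x)"
    and h'_cont: "continuous_on I h'"
    and h_mono: "mono_on I h"
    and h_increases: "h Sm < h SM"
    and wu_interior: "Sm < wu" "wu < SM"
    and \<delta>_opt: "\<And>\<tau> d. \<tau> > 0 \<Longrightarrow> Sm \<le> wu - \<tau>/2 \<Longrightarrow> wu + \<tau>/2 \<le> SM \<Longrightarrow>
              {wu - \<tau>/2 + d .. wu + \<tau>/2 + d} \<subseteq> I \<Longrightarrow>
              (\<exists>e. optimal_offset I h Sm SM wu \<tau> d e) \<Longrightarrow>
              optimal_offset I h Sm SM wu \<tau> d (\<delta> \<tau> d)"
begin

definition admissible :: "real \<Rightarrow> real \<Rightarrow> bool" where
  "admissible \<tau> d \<longleftrightarrow>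
     \<tau> > 0 \<and> Sm \<le> wu - \<tau>/2 \<and> wu + \<tau>/2 \<le> SM \<and> {wu - \<tau>/2 + d..wu + \<tau>/2 + d} \<subseteq> I"

definition link_integral :: "real \<Rightarrow> real" where
  "link_integral e = integral {Sm..SM} (\<lambda>w. h (w + e))"

definition bias_increment :: "real \<Rightarrow> real \<Rightarrow> real" where
  "bias_increment \<tau> d = integral {wu - \<tau>/2..wu + \<tau>/2} (\<lambda>w. h (w + d) - h w)"

lemma h_cont: "continuous_on I h"
  using h_deriv by (meson DERIV_isCont continuous_at_imp_continuous_on)

lemma admissible_windows_subset:
  assumes "admissible \<tau> d"
  shows "{wu - \<tau>/2..wu + \<tau>/2} \<subseteq> I" and "{wu - \<tau>/2 + d..wu + \<tau>/2 + d} \<subseteq> I"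
  using assms score_range_subset by (auto simp: admissible_def)

lemma admissible_near:
  assumes "wu + d\<^sub>0 \<in> I"
  obtains \<rho> where "\<rho> > 0" and "\<And>\<tau> d. 0 < \<tau> \<Longrightarrow> \<tau> < \<rho> \<Longrightarrow> \<bar>d - d\<^sub>0\<bar> < \<rho> \<Longrightarrow> admissible \<tau> d"
proof -
  obtain r where "r > 0" and margin: "{wu + d\<^sub>0 - r..wu + d\<^sub>0 + r} \<subseteq> I"
    using open_interval_Icc_margin[OF open_I interval_I, of "wu + d\<^sub>0" "wu + d\<^sub>0"] assms by auto
  show ?thesis
  proof (rule that[of "min (r/2) (min (wu - Sm) (SM - wu))"])
    fix \<tau> d
    assume \<tau>: "0 < \<tau>" "\<tau> < min (r/2) (min (wu - Sm) (SM - wu))"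
      and d: "\<bar>d - d\<^sub>0\<bar> < min (r/2) (min (wu - Sm) (SM - wu))"
    then have "\<tau> < r/2" "\<tau> < wu - Sm" "\<tau> < SM - wu" "\<bar>d - d\<^sub>0\<bar> < r/2"
      using d by simp_all
    then have "{wu - \<tau>/2 + d..wu + \<tau>/2 + d} \<subseteq> {wu + d\<^sub>0 - r..wu + d\<^sub>0 + r}"
      using abs_less_iff[of "d - d\<^sub>0" "r/2"] by auto
    then show "admissible \<tau> d"
      using \<open>0 < \<tau>\<close> \<open>\<tau> < wu - Sm\<close> \<open>\<tau> < SM - wu\<close> margin by (auto simp: admissible_def)
  qed (use \<open>r > 0\<close> wu_interior in auto)
qed

lemma link_integral_has_derivative:
  assumes "{Sm - r..SM + r} \<subseteq> I" and "\<bar>e\<bar> < r"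
  shows "(link_integral has_real_derivative h (SM + e) - h (Sm + e)) (at e)"
  unfolding link_integral_def[abs_def]
  using assms Sm_less_SM
  by (intro integral_shift_has_real_derivative continuous_on_subset[OF h_cont]) auto

lemma link_integral_has_derivative_0: "(link_integral has_real_derivative h SM - h Sm) (at 0)"
proof -
  obtain r where "r > 0" and "{Sm - r..SM + r} \<subseteq> I"
    using open_interval_Icc_margin[OF open_I interval_I score_range_subset] Sm_less_SM by auto
  then show ?thesis
    using link_integral_has_derivative[of r 0] by simp
qed

lemma optimal_offset_iff:
  assumes "admissible \<tau> d" and "{Sm + e..SM + e} \<subseteq> I"
  shows "optimal_offset I h Sm SM wu \<tau> d e \<longleftrightarrow> link_integral e - link_integral 0 = bias_increment \<tau> d"
proof -
  have "continuous_on {wu - \<tau>/2..wu + \<tau>/2} (\<lambda>w. h (w + d) - h w)"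
    using admissible_windows_subset[OF assms(1)] by (intro continuous_on_increment[OF h_cont]) auto
  then have "((\<lambda>w. h (obs_score wu \<tau> d w)) has_integral integral {Sm..SM} h + bias_increment \<tau> d) {Sm..SM}"
    using assms(1) score_range_subset unfolding bias_increment_def admissible_def
    by (intro has_integral_obs_score integrable_continuous_interval continuous_on_subset[OF h_cont]) auto
  moreover have "((\<lambda>w. h (w + e)) has_integral link_integral e) {Sm..SM}"
    unfolding link_integral_def using assms(2) by (intro integrable_integral integrable_on_shift[OF h_cont])
  ultimately have "integral {Sm..SM} (\<lambda>w. h (w + e) - h (obs_score wu \<tau> d w))
      = link_integral e - (integral {Sm..SM} h + bias_increment \<tau> d)"
    by (intro integral_unique has_integral_diff)
  then show ?thesis
    using assms(2) unfolding optimal_offset_def by (auto simp: link_integral_def)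
qed

lemma offset_solves_link_equation:
  obtains m K where "m > 0"
    and "\<And>\<tau> d. admissible \<tau> d \<Longrightarrow> \<bar>bias_increment \<tau> d\<bar> < m \<Longrightarrow>
           link_integral (\<delta> \<tau> d) - link_integral 0 = bias_increment \<tau> d \<and>
           \<bar>\<delta> \<tau> d\<bar> \<le> K * \<bar>bias_increment \<tau> d\<bar>"
proof -
  obtain r\<^sub>0 where "r\<^sub>0 > 0" and margin: "{Sm - r\<^sub>0..SM + r\<^sub>0} \<subseteq> I"
    using open_interval_Icc_margin[OF open_I interval_I score_range_subset] Sm_less_SM by auto
  define r where "r = r\<^sub>0/2"
  have "r > 0" "r < r\<^sub>0"
    using \<open>r\<^sub>0 > 0\<close> by (simp_all add: r_def)
  define J where "J = {e. {Sm + e..SM + e} \<subseteq> I}"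
  have mono: "mono_on J link_integral"
    unfolding J_def link_integral_def
    by (intro mono_onI integral_shift_mono[OF h_mono h_cont]) auto
  have neighbourhood: "{-r..r} \<subseteq> J"
    using margin \<open>r < r\<^sub>0\<close> by (auto simp: J_def)
  have "isCont link_integral e" if "e \<in> {-r..r}" for e
    using that \<open>r < r\<^sub>0\<close> by (intro DERIV_isCont[OF link_integral_has_derivative[OF margin]]) auto
  then have cont: "continuous_on {-r..r} link_integral"
    by (intro continuous_at_imp_continuous_on) blast
  obtain m where "m > 0"
    and solvable: "\<And>y. \<bar>y\<bar> < m \<Longrightarrow> \<exists>e\<in>{-r..r}. link_integral e - link_integral 0 = y"
    and bound: "\<And>y e. \<bar>y\<bar> < m \<Longrightarrow> e \<in> J \<Longrightarrow> link_integral e - link_integral 0 = y \<Longrightarrow>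
                  \<bar>e\<bar> \<le> 2/(h SM - h Sm) * \<bar>y\<bar>"
    using mono_on_local_inverse[OF mono neighbourhood \<open>r > 0\<close> cont link_integral_has_derivative_0]
      h_increases by auto
  show ?thesis
  proof (rule that[OF \<open>m > 0\<close>])
    fix \<tau> d
    assume "admissible \<tau> d" and small: "\<bar>bias_increment \<tau> d\<bar> < m"
    obtain e where "e \<in> J" and "link_integral e - link_integral 0 = bias_increment \<tau> d"
      using solvable[OF small] neighbourhood by blast
    then have "optimal_offset I h Sm SM wu \<tau> d e"
      using optimal_offset_iff[OF \<open>admissible \<tau> d\<close>] by (simp add: J_def)
    \<comment> \<open>The hypothesis on \<delta> only applies once some optimal offset is known to exist.\<close>
    then have "optimal_offset I h Sm SM wu \<tau> d (\<delta> \<tau> d)"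
      using \<delta>_opt \<open>admissible \<tau> d\<close> unfolding admissible_def by blast
    then have "\<delta> \<tau> d \<in> J" and "link_integral (\<delta> \<tau> d) - link_integral 0 = bias_increment \<tau> d"
      using optimal_offset_iff[OF \<open>admissible \<tau> d\<close>] by (auto simp: J_def optimal_offset_def)
    then show "link_integral (\<delta> \<tau> d) - link_integral 0 = bias_increment \<tau> d \<and>
        \<bar>\<delta> \<tau> d\<bar> \<le> 2/(h SM - h Sm) * \<bar>bias_increment \<tau> d\<bar>"
      using bound[OF small] by blast
  qed
qed

lemma offset_ratio_tendsto:
  fixes \<tau> d s :: "'a \<Rightarrow> real"
  assumes "eventually (\<lambda>x. admissible (\<tau> x) (d x)) F"
    and "((\<lambda>x. bias_increment (\<tau> x) (d x) / s x) \<longlongrightarrow> L) F"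
    and "(s \<longlongrightarrow> 0) F" and "eventually (\<lambda>x. s x \<noteq> 0) F"
  shows "((\<lambda>x. \<delta> (\<tau> x) (d x) / s x) \<longlongrightarrow> L / (h SM - h Sm)) F"
proof -
  obtain m K where "m > 0" and solves: "\<And>\<tau> d. admissible \<tau> d \<Longrightarrow> \<bar>bias_increment \<tau> d\<bar> < m \<Longrightarrow>
      link_integral (\<delta> \<tau> d) - link_integral 0 = bias_increment \<tau> d \<and>
      \<bar>\<delta> \<tau> d\<bar> \<le> K * \<bar>bias_increment \<tau> d\<bar>"
    using offset_solves_link_equation by blast
  have "eventually (\<lambda>x. \<bar>bias_increment (\<tau> x) (d x)\<bar> < m \<longrightarrow>
      link_integral (\<delta> (\<tau> x) (d x)) - link_integral 0 = bias_increment (\<tau> x) (d x) \<and>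
      \<bar>\<delta> (\<tau> x) (d x)\<bar> \<le> K * \<bar>bias_increment (\<tau> x) (d x)\<bar>) F"
    using assms(1) by eventually_elim (use solves in blast)
  then show ?thesis
    using link_integral_has_derivative_0 h_increases \<open>m > 0\<close> assms(2-4)
    by (intro tendsto_ratio_of_inverse) auto
qed

lemma BUST_limit:
  assumes "wu + d \<in> I"
  shows "((\<lambda>\<tau>. \<delta> \<tau> d / \<tau>) \<longlongrightarrow> (h (wu + d) - h wu) / (h SM - h Sm)) (at_right 0)"
proof -
  obtain \<rho> where "\<rho> > 0" and admissible: "\<And>\<tau>. 0 < \<tau> \<Longrightarrow> \<tau> < \<rho> \<Longrightarrow> admissible \<tau> d"
    using admissible_near[OF assms] by (metis abs_zero diff_self)
  have admissible_eventually: "eventually (\<lambda>\<tau>. admissible \<tau> d) (at_right 0)"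
    using eventually_at_right_real[OF \<open>\<rho> > 0\<close>] by eventually_elim (simp add: admissible)
  have "admissible (\<rho>/2) d"
    using \<open>\<rho> > 0\<close> by (intro admissible) auto
  then have "continuous_on {wu - \<rho>/4..wu + \<rho>/4} (\<lambda>w. h (w + d) - h w)"
    using admissible_windows_subset[OF \<open>admissible (\<rho>/2) d\<close>]
    by (intro continuous_on_increment[OF h_cont]) simp_all
  then have "((\<lambda>\<tau>. bias_increment \<tau> d / \<tau>) \<longlongrightarrow> h (wu + d) - h wu) (at_right 0)"
    unfolding bias_increment_def using \<open>\<rho> > 0\<close> by (intro tendsto_centered_integral_average) auto
  then show ?thesis
  proof (rule offset_ratio_tendsto[OF admissible_eventually _ tendsto_ident_at])
    show "eventually (\<lambda>\<tau>. \<tau> \<noteq> 0) (at_right (0::real))"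
      using admissible_eventually by eventually_elim (simp add: admissible_def)
  qed
qed

lemma BLUST_limit:
  "((\<lambda>p. \<delta> (fst p) (snd p) / (snd p * fst p)) \<longlongrightarrow> h' wu / (h SM - h Sm))
     (at (0, 0) within {p. fst p > 0 \<and> snd p \<noteq> 0})"
proof -
  let ?F = "at (0::real, 0::real) within {p. fst p > 0 \<and> snd p \<noteq> 0}"
  have "wu \<in> I"
    using wu_interior score_range_subset by auto
  then obtain \<rho> where "\<rho> > 0" and admissible: "\<And>\<tau> d. 0 < \<tau> \<Longrightarrow> \<tau> < \<rho> \<Longrightarrow> \<bar>d\<bar> < \<rho> \<Longrightarrow> admissible \<tau> d"
    using admissible_near[of 0] by auto
  have near_origin: "eventually (\<lambda>p. fst p > 0 \<and> snd p \<noteq> 0 \<and> dist p (0, 0) < \<rho>) ?F"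
    using \<open>\<rho> > 0\<close> unfolding eventually_at by (intro exI[of _ \<rho>]) auto
  then have admissible_eventually: "eventually (\<lambda>p. admissible (fst p) (snd p)) ?F"
  proof eventually_elim
    case (elim p)
    then show ?case
      using dist_fst_le[of p "(0, 0)"] dist_snd_le[of p "(0, 0)"] by (intro admissible) auto
  qed
  have "{wu - \<rho>/4..wu + \<rho>/4} \<subseteq> I"
    using admissible_windows_subset(1)[OF admissible[of "\<rho>/2" 0]] \<open>\<rho> > 0\<close> by auto
  moreover have "isCont h' wu"
    using h'_cont open_I \<open>wu \<in> I\<close> continuous_on_eq_continuous_at by blast
  ultimately have "((\<lambda>p. bias_increment (fst p) (snd p) / (snd p * fst p)) \<longlongrightarrow> h' wu) ?F"
    unfolding bias_increment_def using \<open>\<rho> > 0\<close> h_deriv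
    by (intro tendsto_centered_increment_average[of "\<rho>/4"]) auto
  moreover have "((\<lambda>p. snd p * fst p) \<longlongrightarrow> 0) ?F"
  proof -
    have "((\<lambda>p. p) \<longlongrightarrow> (0, 0)) ?F"
      by (rule tendsto_ident_at)
    from tendsto_mult[OF tendsto_snd[OF this] tendsto_fst[OF this]] show ?thesis
      by simp
  qed
  moreover have "eventually (\<lambda>p. snd p * fst p \<noteq> 0) ?F"
    using near_origin by eventually_elim simp
  ultimately show ?thesis
    by (rule offset_ratio_tendsto[OF admissible_eventually])
qed

end

theorem theorem1:
  fixes h h' :: "real \<Rightarrow> real" and I :: "real set"
    and Sm SM wu :: real and \<delta> :: "real \<Rightarrow> real \<Rightarrow> real"
  assumes "Sm < SM"
    and "open I" and "is_interval I" and "{Sm..SM} \<subseteq> I"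
    and "\<And>x. x \<in> I \<Longrightarrow> (h has_real_derivative h' x) (at x)"
    and "continuous_on I h'"
    and "mono_on I h"
    and "h ` {Sm..SM} = {h Sm..h SM}"
    and "h SM > h Sm"
    and "Sm < wu" and "wu < SM"
    and \<delta>_opt: "\<And>\<tau> d. \<tau> > 0 \<Longrightarrow> Sm \<le> wu - \<tau>/2 \<Longrightarrow> wu + \<tau>/2 \<le> SM \<Longrightarrow>
              {wu - \<tau>/2 + d .. wu + \<tau>/2 + d} \<subseteq> I \<Longrightarrow>
              (\<exists>e. optimal_offset I h Sm SM wu \<tau> d e) \<Longrightarrow>
              optimal_offset I h Sm SM wu \<tau> d (\<delta> \<tau> d)"
  shows "(\<forall>d. wu + d \<in> I \<longrightarrow>
            ((\<lambda>\<tau>. \<delta> \<tau> d / \<tau>) \<longlongrightarrow> (h (wu + d) - h wu) / (h SM - h Sm)) (at_right 0))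
       \<and> ((\<lambda>p. \<delta> (fst p) (snd p) / (snd p * fst p)) \<longlongrightarrow> h' wu / (h SM - h Sm))
            (at (0, 0) within {p. fst p > 0 \<and> snd p \<noteq> 0})"
proof -
  interpret bias_underspecification h h' I Sm SM wu \<delta>
    by unfold_locales (fact assms)+
  show ?thesis
    using BUST_limit BLUST_limit by blast
qed

end
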